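(* Let $\tau$ be a holomorphic involution of $H$ and $\alpha$ a root of $H$ in $G$ with $\alpha\circ\tau=\alpha$. Then $\alpha(h)=\pm1$ for all $h\in H^{-\tau}_Z$ and $\alpha(h)=1$ for all $h\in A_\tau$, so $\alpha$ induces a character $\bar\alpha$ of $U_\tau$ of order at most $2$. Moreover the reflection $s_\alpha$ (acting on $H$) preserves $H^{-\tau}_Z$ and acts trivially on $A_\tau$, so it induces an action on $U_\tau$, and for $u\in U_\tau$: $$s_\alpha(u)=\begin{cases}u&\text{if }\bar\alpha(u)=1,\\ m_\alpha u&\text{otherwise,}\end{cases}$$ where $m_\alpha=\check\alpha(-1)$ (which lies in $H^{-\tau}_Z$).
   Context: $G$ is a connected complex reductive group with maximal torus $H$ and Weyl group $W=\mathrm{Norm}_G(H)/H$ acting on $H$. $H^{-\tau}=\{h\in H:\tau(h)=h^{-1}\}$, $H^{-\tau}_Z=\{h\in H:h\tau(h)\in Z(G)\}$, $A_\tau$ the identity component of $H^{-\tau}$, $U_\tau=H^{-\tau}_Z/A_\tau$. $\check\alpha$ is the coroot of $\alpha$, viewed as a cocharacter $\mathbb C^\times\to H$.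
   Formalization: The involution $\tau$ also permutes the roots of H in G: each root composed with $\tau$ is again a root. The paper assumes this as well. *)

theory Defs
  imports "HOL-Analysis.Analysis"
begin

(* The maximal torus H is modelled as (C^x)^n inside complex^'n, with
   character lattice X = int^'n and cocharacter lattice Y = int^'n. *)

definition torus :: "(complex ^ 'n) set" where
  "torus = {h. \<forall>i. h $ i \<noteq> 0}"

definition tmul :: "complex ^ 'n \<Rightarrow> complex ^ 'n \<Rightarrow> complex ^ 'n" where
  "tmul g h = (\<chi> i. g $ i * h $ i)"

definition tinv :: "complex ^ 'n \<Rightarrow> complex ^ 'n" where
  "tinv h = (\<chi> i. inverse (h $ i))"

definition tone :: "complex ^ 'n" where
  "tone = (\<chi> i. 1)"

definition char_of :: "int ^ 'n \<Rightarrow> complex ^ 'n \<Rightarrow> complex" where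
  "char_of k h = (\<Prod>i\<in>UNIV. (h $ i) powi (k $ i))"

definition cochar :: "int ^ 'n \<Rightarrow> complex \<Rightarrow> complex ^ 'n" where
  "cochar m z = (\<chi> i. z powi (m $ i))"

definition pairing :: "int ^ 'n \<Rightarrow> int ^ 'n \<Rightarrow> int" where
  "pairing k m = (\<Sum>i\<in>UNIV. k $ i * m $ i)"

definition reflX :: "int ^ 'n \<Rightarrow> int ^ 'n \<Rightarrow> int ^ 'n \<Rightarrow> int ^ 'n" where
  "reflX a av x = x - pairing x av *s a"

definition reflY :: "int ^ 'n \<Rightarrow> int ^ 'n \<Rightarrow> int ^ 'n \<Rightarrow> int ^ 'n" where
  "reflY a av y = y - pairing a y *s av"

(* Reduced root datum (X, R, Y, R^vee) with X = Y = Z^n; cor gives the coroot.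
   Connected complex reductive groups G with maximal torus H = (C^x)^n
   correspond exactly to such root data. *)
definition reduced_root_datum :: "(int ^ 'n) set \<Rightarrow> (int ^ 'n \<Rightarrow> int ^ 'n) \<Rightarrow> bool" where
  "reduced_root_datum R cor \<longleftrightarrow>
     finite R \<and>
     (\<forall>a\<in>R. pairing a (cor a) = 2) \<and>
     (\<forall>a\<in>R. \<forall>b\<in>R. reflX a (cor a) b \<in> R) \<and>
     (\<forall>a\<in>R. \<forall>b\<in>R. reflY a (cor a) (cor b) \<in> cor ` R) \<and>
     (\<forall>a\<in>R. \<forall>b\<in>R. \<forall>c::int. b = c *s a \<longrightarrow> c = 1 \<or> c = -1)"

(* Z(G) for connected reductive G: intersection of kernels of the roots *)
definition centre :: "(int ^ 'n) set \<Rightarrow> (complex ^ 'n) set" where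
  "centre R = {h \<in> torus. \<forall>b\<in>R. char_of b h = 1}"

definition weyl_refl :: "int ^ 'n \<Rightarrow> int ^ 'n \<Rightarrow> complex ^ 'n \<Rightarrow> complex ^ 'n" where
  "weyl_refl a av h = tmul h (cochar av (inverse (char_of a h)))"

definition Hmt :: "(complex ^ 'n \<Rightarrow> complex ^ 'n) \<Rightarrow> (complex ^ 'n) set" where
  "Hmt \<tau> = {h \<in> torus. \<tau> h = tinv h}"

definition HmtZ :: "(int ^ 'n) set \<Rightarrow> (complex ^ 'n \<Rightarrow> complex ^ 'n) \<Rightarrow> (complex ^ 'n) set" where
  "HmtZ R \<tau> = {h \<in> torus. tmul h (\<tau> h) \<in> centre R}"

definition Atau :: "(complex ^ 'n \<Rightarrow> complex ^ 'n) \<Rightarrow> (complex ^ 'n) set" where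
  "Atau \<tau> = connected_component_set (Hmt \<tau>) tone"

(* coset h A_tau, i.e. an element of U_tau = H^{-tau}_Z / A_tau *)
definition tcoset :: "complex ^ 'n \<Rightarrow> (complex ^ 'n) set \<Rightarrow> (complex ^ 'n) set" where
  "tcoset h S = tmul h ` S"

end

theory Submission imports Defs begin

text \<open>
  Since \<alpha> \<circ> \<tau> = \<alpha>, for h in H^{-\<tau>}_Z we get \<alpha>(h)^2 = \<alpha>(h \<tau>(h)) = 1, and on H^{-\<tau>}
  we get \<alpha>(h) = \<alpha>(h)^{-1}; so \<alpha> takes values in {1, -1} there and, by continuity and
  connectedness, is 1 on A_\<tau>. The reflection is s_\<alpha>(h) = h \<alpha>^\<or>(\<alpha>(h)^{-1}), which is h or
  h m_\<alpha> accordingly, so everything reduces to m_\<alpha> lying in H^{-\<tau>}_Z, i.e. to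
  <\<beta> + \<beta> \<circ> \<tau>, \<alpha>^\<or>> being even for every root \<beta>. In fact <\<beta> \<circ> \<tau>, \<alpha>^\<or>> = <\<beta>, \<alpha>^\<or>>:
  otherwise, with k the difference, alternately applying s_\<alpha> and pullback along \<tau> to \<beta> and
  \<beta> \<circ> \<tau> produces the roots \<beta> + n k \<alpha> for all n, contradicting finiteness of R.
\<close>

lemma power_int_prod:
  "finite A \<Longrightarrow> (\<Prod>i\<in>A. f i) powi c = (\<Prod>i\<in>A. (f i :: complex) powi c)"
  by (induction A rule: finite_induct) (auto simp: power_int_mult_distrib)

lemma power_int_sum:
  "finite A \<Longrightarrow> (x::complex) \<noteq> 0 \<Longrightarrow> x powi (\<Sum>i\<in>A. f i) = (\<Prod>i\<in>A. x powi f i)"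
  by (induction A rule: finite_induct) (auto simp: power_int_add)

lemma power_int_inj_exp:
  assumes "(x::real) > 1" and "x powi k = x powi l"
  shows "k = l"
  using assms power_int_strict_increasing[of k l x] power_int_strict_increasing[of l k x]
  by (cases k l rule: linorder_cases) auto

lemma tmul_torus: "g \<in> torus \<Longrightarrow> h \<in> torus \<Longrightarrow> tmul g h \<in> torus"
  by (auto simp: torus_def tmul_def)

lemma tone_torus: "tone \<in> torus"
  by (auto simp: torus_def tone_def)

lemma cochar_torus: "z \<noteq> 0 \<Longrightarrow> cochar m z \<in> torus"
  by (simp add: cochar_def torus_def)

lemma tmul_commute: "tmul g h = tmul h g"
  by (simp add: tmul_def mult.commute)

lemma tmul_assoc: "tmul (tmul f g) h = tmul f (tmul g h)"
  by (simp add: tmul_def mult.assoc)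

lemma tmul_tone: "tmul h tone = h"
  by (simp add: tmul_def tone_def vec_eq_iff)

lemma tmul_tinv: "h \<in> torus \<Longrightarrow> tmul h (tinv h) = tone"
  by (simp add: tmul_def tinv_def tone_def torus_def vec_eq_iff)

lemma cochar_one: "cochar m 1 = tone"
  by (simp add: cochar_def tone_def)

lemma char_of_nonzero: "h \<in> torus \<Longrightarrow> char_of k h \<noteq> 0"
  by (auto simp: char_of_def torus_def)

lemma char_of_tone: "char_of k tone = 1"
  by (simp add: char_of_def tone_def)

lemma char_of_tmul:
  "g \<in> torus \<Longrightarrow> h \<in> torus \<Longrightarrow> char_of k (tmul g h) = char_of k g * char_of k h"
  by (simp add: char_of_def tmul_def power_int_mult_distrib prod.distrib)

lemma char_of_tinv: "h \<in> torus \<Longrightarrow> char_of k (tinv h) = inverse (char_of k h)"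
  by (simp add: char_of_def tinv_def power_int_inverse prod_inversef[symmetric] o_def)

lemma char_of_add: "h \<in> torus \<Longrightarrow> char_of (k + l) h = char_of k h * char_of l h"
  by (simp add: char_of_def torus_def power_int_add prod.distrib)

lemma char_of_scale: "char_of (c *s k) h = char_of k h powi c"
  unfolding char_of_def power_int_prod[OF finite_class.finite_UNIV]
  by (rule prod.cong) (auto, metis mult.commute power_int_mult)

lemma char_of_diff: "h \<in> torus \<Longrightarrow> char_of (k - l) h = char_of k h / char_of l h"
  using char_of_add[of h "k - l" l] char_of_nonzero[of h l] by (simp add: field_simps)

lemma char_of_cochar: "z \<noteq> 0 \<Longrightarrow> char_of k (cochar m z) = z powi pairing k m"
  by (simp add: char_of_def cochar_def pairing_def power_int_sum power_int_mult[symmetric]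
      mult.commute)

lemma continuous_on_char_of: "S \<subseteq> torus \<Longrightarrow> continuous_on S (char_of k)"
  unfolding char_of_def[abs_def] by (intro continuous_intros) (auto simp: torus_def)

lemma char_of_inject:
  assumes "\<forall>h\<in>torus. char_of k h = char_of l (h :: complex ^ 'n)"
  shows "k = l"
proof (subst vec_eq_iff, intro allI)
  fix i :: 'n
  define h :: "complex ^ 'n" where "h = (\<chi> j. if j = i then 2 else 1)"
  have char_h: "char_of m h = of_real ((2::real) powi (m $ i))" for m
  proof -
    have "char_of m h = (\<Prod>j\<in>UNIV. if j = i then 2 powi (m $ i) else 1)"
      unfolding char_of_def h_def by (rule prod.cong) auto
    then show ?thesis by simp
  qed
  have "h \<in> torus" by (simp add: h_def torus_def)
  with assms have "char_of k h = char_of l h" by blast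
  then have "(2::real) powi (k $ i) = 2 powi (l $ i)"
    unfolding char_h of_real_eq_iff .
  then show "k $ i = l $ i" by (rule power_int_inj_exp[rotated]) simp
qed

lemma pairing_add: "pairing (x + y) m = pairing x m + pairing y m"
  by (simp add: pairing_def sum.distrib algebra_simps)

lemma pairing_scale: "pairing (t *s x) m = t * pairing x m"
  by (simp add: pairing_def sum_distrib_left algebra_simps)

lemma pairing_diff: "pairing (x - y) m = pairing x m - pairing y m"
  by (simp add: pairing_def sum_subtractf algebra_simps)

lemma infinite_if_contains_progression:
  assumes "a \<noteq> 0" and "k \<noteq> 0" and "\<forall>n::nat. b + (int n * k) *s a \<in> R"
  shows "infinite R"
proof
  assume "finite R"
  from \<open>a \<noteq> 0\<close> obtain i where "a $ i \<noteq> 0" by (auto simp: vec_eq_iff)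
  then have "inj (\<lambda>n::nat. b + (int n * k) *s a)"
    using \<open>k \<noteq> 0\<close> by (intro injI) (auto simp: vec_eq_iff dest!: spec[of _ i])
  with assms(3) \<open>finite R\<close> show False
    by (meson finite_imageD finite_subset image_subsetI infinite_UNIV_nat)
qed

locale torus_involution =
  fixes \<tau> :: "complex ^ 'n \<Rightarrow> complex ^ 'n"
  assumes tau_maps: "\<forall>h\<in>torus. \<tau> h \<in> torus"
    and tau_hom: "\<forall>g\<in>torus. \<forall>h\<in>torus. \<tau> (tmul g h) = tmul (\<tau> g) (\<tau> h)"
    and tau_invol: "\<forall>h\<in>torus. \<tau> (\<tau> h) = h"
begin

definition tau_pullback :: "int ^ 'n \<Rightarrow> int ^ 'n \<Rightarrow> bool" where
  "tau_pullback b c \<longleftrightarrow> (\<forall>h\<in>torus. char_of b (\<tau> h) = char_of c h)"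

lemma tau_pullback_unique: "tau_pullback b c \<Longrightarrow> tau_pullback b c' \<Longrightarrow> c = c'"
  unfolding tau_pullback_def by (rule char_of_inject) simp

lemma tau_pullback_sym: "tau_pullback b c \<Longrightarrow> tau_pullback c b"
  using tau_maps tau_invol unfolding tau_pullback_def by metis

lemma tau_pullback_add:
  "tau_pullback x x' \<Longrightarrow> tau_pullback y y' \<Longrightarrow> tau_pullback (x + y) (x' + y')"
  using tau_maps by (simp add: tau_pullback_def char_of_add)

lemma tau_pullback_diff:
  "tau_pullback x x' \<Longrightarrow> tau_pullback y y' \<Longrightarrow> tau_pullback (x - y) (x' - y')"
  using tau_maps by (simp add: tau_pullback_def char_of_diff)

lemma tau_pullback_scale: "tau_pullback x x' \<Longrightarrow> tau_pullback (t *s x) (t *s x')"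
  by (simp add: tau_pullback_def char_of_scale)

lemma tau_tone: "\<tau> tone = tone"
proof -
  have t: "\<tau> tone \<in> torus" using tau_maps tone_torus by blast
  have "tmul (\<tau> tone) (\<tau> tone) = \<tau> tone"
    using tau_hom tone_torus by (metis tmul_tone)
  then have "tmul (tinv (\<tau> tone)) (tmul (\<tau> tone) (\<tau> tone)) = tmul (tinv (\<tau> tone)) (\<tau> tone)"
    by simp
  then show ?thesis using t by (metis tmul_assoc tmul_commute tmul_tinv tmul_tone)
qed

lemma Atau_subset_Hmt: "Atau \<tau> \<subseteq> Hmt \<tau>"
  by (simp add: Atau_def connected_component_subset)

lemma Atau_subset_torus: "Atau \<tau> \<subseteq> torus"
  using Atau_subset_Hmt by (auto simp: Hmt_def)

lemma tone_in_Atau: "tone \<in> Atau \<tau>"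
  using tau_tone tone_torus
  by (simp add: Atau_def Hmt_def tinv_def tone_def)

lemma HmtZ_subset_torus: "HmtZ R \<tau> \<subseteq> torus"
  by (auto simp: HmtZ_def)

lemma Hmt_subset_HmtZ: "Hmt \<tau> \<subseteq> HmtZ R \<tau>"
  by (auto simp: Hmt_def HmtZ_def centre_def tmul_tinv tone_torus char_of_tone)

lemma tmul_centre: "g \<in> centre R \<Longrightarrow> h \<in> centre R \<Longrightarrow> tmul g h \<in> centre R"
  by (auto simp: centre_def tmul_torus char_of_tmul)

lemma tmul_HmtZ: "g \<in> HmtZ R \<tau> \<Longrightarrow> h \<in> HmtZ R \<tau> \<Longrightarrow> tmul g h \<in> HmtZ R \<tau>"
proof -
  assume g: "g \<in> HmtZ R \<tau>" and h: "h \<in> HmtZ R \<tau>"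
  then have "tmul (tmul g h) (\<tau> (tmul g h)) = tmul (tmul g (\<tau> g)) (tmul h (\<tau> h))"
    using tau_hom by (auto simp: HmtZ_def) (metis tmul_assoc tmul_commute)
  with g h show ?thesis by (auto simp: HmtZ_def tmul_torus tmul_centre)
qed

lemma char_of_HmtZ_sign:
  assumes "tau_pullback a a" and "a \<in> R" and "h \<in> HmtZ R \<tau>"
  shows "char_of a h = 1 \<or> char_of a h = -1"
proof -
  from assms(3) have h: "h \<in> torus" "tmul h (\<tau> h) \<in> centre R" by (auto simp: HmtZ_def)
  have "char_of a h * char_of a h = char_of a (tmul h (\<tau> h))"
    using h(1) tau_maps assms(1) by (simp add: char_of_tmul tau_pullback_def)
  also have "\<dots> = 1" using h(2) assms(2) by (simp add: centre_def)
  finally show ?thesis by (simp add: square_eq_1_iff)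
qed

lemma char_of_Hmt_sign:
  assumes "tau_pullback a a" and "h \<in> Hmt \<tau>"
  shows "char_of a h = 1 \<or> char_of a h = -1"
proof -
  from assms(2) have h: "h \<in> torus" "\<tau> h = tinv h" by (auto simp: Hmt_def)
  have "char_of a (\<tau> h) = char_of a h" using assms(1) h(1) by (simp add: tau_pullback_def)
  then have "inverse (char_of a h) = char_of a h" using h by (simp add: char_of_tinv)
  then have "char_of a h * char_of a h = 1"
    using char_of_nonzero[OF h(1)] by (metis right_inverse)
  then show ?thesis by (simp add: square_eq_1_iff)
qed

lemma char_of_Atau:
  assumes "tau_pullback a a" and "g \<in> Atau \<tau>"
  shows "char_of a g = 1"
proof -
  have conn: "connected (char_of a ` Atau \<tau>)"
    by (intro connected_continuous_image continuous_on_char_of Atau_subset_torus)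
      (simp add: Atau_def)
  have "char_of a ` Atau \<tau> \<subseteq> {1, -1}"
    using char_of_Hmt_sign[OF assms(1)] Atau_subset_Hmt by auto
  then have "finite (char_of a ` Atau \<tau>)" by (rule finite_subset) simp
  then obtain z where "char_of a ` Atau \<tau> = {z}"
    using connected_finite_iff_sing[OF conn] tone_in_Atau by blast
  with assms(2) tone_in_Atau show ?thesis by (metis char_of_tone image_eqI singletonD)
qed

end

locale root_fixing_involution = torus_involution \<tau>
  for \<tau> :: "complex ^ 'n \<Rightarrow> complex ^ 'n" +
  fixes R :: "(int ^ 'n) set" and cor :: "int ^ 'n \<Rightarrow> int ^ 'n" and \<alpha> :: "int ^ 'n"
  assumes rd: "reduced_root_datum R cor"
    and tau_roots: "\<forall>b\<in>R. \<exists>c\<in>R. \<forall>h\<in>torus. char_of b (\<tau> h) = char_of c h"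
    and alpha_root: "\<alpha> \<in> R"
    and alpha_tau: "\<forall>h\<in>torus. char_of \<alpha> (\<tau> h) = char_of \<alpha> h"
begin

abbreviation "m\<^sub>\<alpha> \<equiv> cochar (cor \<alpha>) (-1)"

lemma alpha_pullback: "tau_pullback \<alpha> \<alpha>"
  using alpha_tau by (simp add: tau_pullback_def)

lemma pullback_root: "b \<in> R \<Longrightarrow> \<exists>c\<in>R. tau_pullback b c"
  using tau_roots by (simp add: tau_pullback_def)

lemma finite_roots: "finite R"
  and pairing_alpha_coroot: "pairing \<alpha> (cor \<alpha>) = 2"
  and reflX_root: "b \<in> R \<Longrightarrow> reflX \<alpha> (cor \<alpha>) b \<in> R"
  using rd alpha_root by (auto simp: reduced_root_datum_def)

text \<open>Reflect x', pull back along \<tau> and reflect again.\<close>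

lemma root_string_step:
  assumes "x \<in> R" and "tau_pullback x x'"
  defines "k \<equiv> pairing x' (cor \<alpha>) - pairing x (cor \<alpha>)"
  shows "x + k *s \<alpha> \<in> R" and "tau_pullback (x + k *s \<alpha>) (x' + k *s \<alpha>)"
proof -
  define p where "p = pairing x' (cor \<alpha>)"
  obtain x'' where "x'' \<in> R" and "tau_pullback x x''" using pullback_root assms(1) by blast
  with assms(2) have x'R: "x' \<in> R" using tau_pullback_unique by metis
  obtain c where cR: "c \<in> R" and c: "tau_pullback (reflX \<alpha> (cor \<alpha>) x') c"
    using pullback_root reflX_root[OF x'R] by blast
  have "tau_pullback (x' - p *s \<alpha>) (x - p *s \<alpha>)"
    using tau_pullback_diff[OF tau_pullback_sym[OF assms(2)] tau_pullback_scale[OF alpha_pullback]] .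
  with c have "c = x - p *s \<alpha>"
    using tau_pullback_unique by (metis reflX_def p_def)
  moreover have "reflX \<alpha> (cor \<alpha>) (x - p *s \<alpha>) = x + k *s \<alpha>"
    by (simp add: reflX_def k_def p_def[symmetric] pairing_diff pairing_scale pairing_alpha_coroot
        vec_eq_iff algebra_simps)
  ultimately show "x + k *s \<alpha> \<in> R" using reflX_root cR by metis
  show "tau_pullback (x + k *s \<alpha>) (x' + k *s \<alpha>)"
    using tau_pullback_add[OF assms(2) tau_pullback_scale[OF alpha_pullback]] .
qed

lemma pairing_coroot_pullback:
  assumes "b \<in> R" and "tau_pullback b c"
  shows "pairing c (cor \<alpha>) = pairing b (cor \<alpha>)"
proof (rule ccontr)
  define k where "k = pairing c (cor \<alpha>) - pairing b (cor \<alpha>)"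
  assume "pairing c (cor \<alpha>) \<noteq> pairing b (cor \<alpha>)"
  then have "k \<noteq> 0" by (simp add: k_def)
  have string: "b + (int n * k) *s \<alpha> \<in> R \<and> tau_pullback (b + (int n * k) *s \<alpha>) (c + (int n * k) *s \<alpha>)"
    for n :: nat
  proof (induction n)
    case 0
    then show ?case using assms by simp
  next
    case (Suc n)
    define x where "x = b + (int n * k) *s \<alpha>"
    define x' where "x' = c + (int n * k) *s \<alpha>"
    have "x \<in> R" and "tau_pullback x x'" using Suc by (simp_all add: x_def x'_def)
    moreover have "pairing x' (cor \<alpha>) - pairing x (cor \<alpha>) = k"
      by (simp add: x_def x'_def k_def pairing_add pairing_scale)
    moreover have "b + (int (Suc n) * k) *s \<alpha> = x + k *s \<alpha>"
      and "c + (int (Suc n) * k) *s \<alpha> = x' + k *s \<alpha>"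
      by (simp_all add: x_def x'_def vec_eq_iff algebra_simps)
    ultimately show ?case using root_string_step[of x x'] by simp
  qed
  have "\<alpha> \<noteq> 0" using pairing_alpha_coroot by (auto simp: pairing_def)
  with \<open>k \<noteq> 0\<close> string have "infinite R" by (intro infinite_if_contains_progression) auto
  with finite_roots show False by simp
qed

lemma m_alpha_HmtZ: "m\<^sub>\<alpha> \<in> HmtZ R \<tau>"
proof -
  have m: "m\<^sub>\<alpha> \<in> torus" by (simp add: cochar_torus)
  have "char_of b (tmul m\<^sub>\<alpha> (\<tau> m\<^sub>\<alpha>)) = 1" if b: "b \<in> R" for b
  proof -
    obtain c where "c \<in> R" and c: "tau_pullback b c" using pullback_root b by blast
    then have "char_of b (tmul m\<^sub>\<alpha> (\<tau> m\<^sub>\<alpha>)) = char_of b m\<^sub>\<alpha> * char_of c m\<^sub>\<alpha>"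
      using m tau_maps by (simp add: char_of_tmul tau_pullback_def)
    also have "\<dots> = ((-1) * (-1)) powi pairing b (cor \<alpha>)"
      by (simp add: char_of_cochar pairing_coroot_pullback[OF b c] power_int_mult_distrib)
    finally show ?thesis by simp
  qed
  with m tau_maps show ?thesis by (simp add: HmtZ_def centre_def tmul_torus)
qed

lemma weyl_refl_HmtZ:
  "h \<in> HmtZ R \<tau> \<Longrightarrow> weyl_refl \<alpha> (cor \<alpha>) h = (if char_of \<alpha> h = 1 then h else tmul h m\<^sub>\<alpha>)"
  using char_of_HmtZ_sign[OF alpha_pullback alpha_root, of h]
  by (auto simp: weyl_refl_def cochar_one tmul_tone)

lemma char_of_alpha_coset:
  assumes "h \<in> HmtZ R \<tau>" and "g \<in> Atau \<tau>"
  shows "char_of \<alpha> (tmul h g) = char_of \<alpha> h"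
  using assms HmtZ_subset_torus Atau_subset_torus char_of_Atau[OF alpha_pullback assms(2)]
  by (simp add: char_of_tmul subset_iff)

lemma weyl_refl_coset:
  assumes "h \<in> HmtZ R \<tau>"
  shows "weyl_refl \<alpha> (cor \<alpha>) ` tcoset h (Atau \<tau>) =
    (if char_of \<alpha> h = 1 then tcoset h (Atau \<tau>) else tcoset (tmul m\<^sub>\<alpha> h) (Atau \<tau>))"
proof -
  have "weyl_refl \<alpha> (cor \<alpha>) (tmul h g) = (if char_of \<alpha> h = 1 then tmul h g else tmul (tmul m\<^sub>\<alpha> h) g)"
    if "g \<in> Atau \<tau>" for g
  proof -
    have "tmul h g \<in> HmtZ R \<tau>"
      using that assms Atau_subset_Hmt Hmt_subset_HmtZ tmul_HmtZ by blast
    then show ?thesis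
      using weyl_refl_HmtZ char_of_alpha_coset[OF assms that] by (simp add: tmul_def ac_simps)
  qed
  then show ?thesis by (auto simp: tcoset_def image_image cong: image_cong)
qed

end

theorem lemma4p7:
  fixes R :: "(int ^ 'n) set" and cor :: "int ^ 'n \<Rightarrow> int ^ 'n"
    and \<tau> :: "complex ^ 'n \<Rightarrow> complex ^ 'n" and \<alpha> :: "int ^ 'n"
  assumes rd: "reduced_root_datum R cor"
    and tau_maps: "\<forall>h\<in>torus. \<tau> h \<in> torus"
    and tau_hom: "\<forall>g\<in>torus. \<forall>h\<in>torus. \<tau> (tmul g h) = tmul (\<tau> g) (\<tau> h)"
    and tau_invol: "\<forall>h\<in>torus. \<tau> (\<tau> h) = h"
    and tau_holo: "\<forall>h\<in>torus. \<exists>D :: complex ^ 'n ^ 'n. (\<tau> has_derivative (\<lambda>v. D *v v)) (at h)"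
    and tau_roots: "\<forall>b\<in>R. \<exists>c\<in>R. \<forall>h\<in>torus. char_of b (\<tau> h) = char_of c h"
    and alpha_root: "\<alpha> \<in> R"
    and alpha_tau: "\<forall>h\<in>torus. char_of \<alpha> (\<tau> h) = char_of \<alpha> h"
  shows "(\<forall>h\<in>HmtZ R \<tau>. char_of \<alpha> h = 1 \<or> char_of \<alpha> h = -1)
    \<and> (\<forall>a\<in>Atau \<tau>. char_of \<alpha> a = 1)
    \<and> (\<forall>h\<in>HmtZ R \<tau>. \<forall>g\<in>tcoset h (Atau \<tau>). char_of \<alpha> g = char_of \<alpha> h)
    \<and> (\<forall>h\<in>HmtZ R \<tau>. weyl_refl \<alpha> (cor \<alpha>) h \<in> HmtZ R \<tau>)
    \<and> (\<forall>a\<in>Atau \<tau>. weyl_refl \<alpha> (cor \<alpha>) a = a)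
    \<and> cochar (cor \<alpha>) (-1) \<in> HmtZ R \<tau>
    \<and> (\<forall>h\<in>HmtZ R \<tau>.
         weyl_refl \<alpha> (cor \<alpha>) ` tcoset h (Atau \<tau>) =
           (if char_of \<alpha> h = 1 then tcoset h (Atau \<tau>)
            else tcoset (tmul (cochar (cor \<alpha>) (-1)) h) (Atau \<tau>)))"
proof -
  interpret root_fixing_involution \<tau> R cor \<alpha>
    using assms by unfold_locales
  have sign: "\<forall>h\<in>HmtZ R \<tau>. char_of \<alpha> h = 1 \<or> char_of \<alpha> h = -1"
    using char_of_HmtZ_sign[OF alpha_pullback alpha_root] by blast
  have Atau: "\<forall>a\<in>Atau \<tau>. char_of \<alpha> a = 1"
    using char_of_Atau[OF alpha_pullback] by blast
  have "\<forall>h\<in>HmtZ R \<tau>. weyl_refl \<alpha> (cor \<alpha>) h \<in> HmtZ R \<tau>"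
    using weyl_refl_HmtZ tmul_HmtZ m_alpha_HmtZ by simp
  moreover have "\<forall>a\<in>Atau \<tau>. weyl_refl \<alpha> (cor \<alpha>) a = a"
    using Atau by (simp add: weyl_refl_def cochar_one tmul_tone)
  ultimately show ?thesis
    using sign Atau char_of_alpha_coset m_alpha_HmtZ weyl_refl_coset
    by (auto simp: tcoset_def)
qed

end
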